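(* Let $k\ge 2$ and $\alpha\in[0,1)$ be such that $b=\frac{k-1}{1-\alpha}$ is an integer, and let $n$ be a positive integer divisible by $b$; put $t=\alpha n$ (an integer). Then \[ S(n,t,k)\ \ge\ \binom{b}{\alpha b}^{n/b}. \]
   Context: A $k$-CNF formula is a conjunction of clauses (disjunctions of literals) each of width at most $k$. $\mathrm{sat}_t(F)$ is the set of satisfying assignments of $F$ of Hamming weight exactly $t$. $F$ is $t$-admissible if it has no satisfying assignment of Hamming weight less than $t$. $S(n,t,k)$ is the maximum of $|\mathrm{sat}_t(F)|$ over all $t$-admissible $k$-CNF formulas $F$ on $n$ variables. *)

theory Defs
  imports Complex_Main
begin

text \<open>A literal is a pair (i, b): b = True means the positive literal x_i, b = False its negation.
A clause is a finite set of literals (their disjunction); a CNF formula is a finite set of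
clauses (their conjunction). An assignment is represented by the set of variables set to 1;
its Hamming weight is its cardinality.\<close>

type_synonym literal = "nat \<times> bool"
type_synonym clause = "literal set"
type_synonym cnf = "clause set"

definition is_kcnf :: "nat \<Rightarrow> nat \<Rightarrow> cnf \<Rightarrow> bool" where
  "is_kcnf n k F \<longleftrightarrow> finite F \<and>
     (\<forall>C\<in>F. finite C \<and> card C \<le> k \<and> (\<forall>(i, b)\<in>C. i < n))"

definition sat_clause :: "nat set \<Rightarrow> clause \<Rightarrow> bool" where
  "sat_clause A C \<longleftrightarrow> (\<exists>(i, b)\<in>C. (i \<in> A) = b)"

definition satisfies :: "nat set \<Rightarrow> cnf \<Rightarrow> bool" where
  "satisfies A F \<longleftrightarrow> (\<forall>C\<in>F. sat_clause A C)"

definition sat_t :: "nat \<Rightarrow> nat \<Rightarrow> cnf \<Rightarrow> nat set set" where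
  "sat_t n t F = {A. A \<subseteq> {0..<n} \<and> card A = t \<and> satisfies A F}"

definition admissible :: "nat \<Rightarrow> nat \<Rightarrow> cnf \<Rightarrow> bool" where
  "admissible n t F \<longleftrightarrow> (\<forall>A. A \<subseteq> {0..<n} \<and> card A < t \<longrightarrow> \<not> satisfies A F)"

definition S :: "nat \<Rightarrow> nat \<Rightarrow> nat \<Rightarrow> nat" where
  "S n t k = Max {card (sat_t n t F) | F. is_kcnf n k F \<and> admissible n t F}"

end

theory Submission
  imports Defs "HOL-Library.FuncSet" "HOL-Library.Disjoint_Sets"
begin

text \<open>Split the n = m b variables into m consecutive blocks of size b and take all positive
clauses of width k inside a single block. An assignment satisfies this formula iff it leaves fewer
than k variables of every block unset, i.e. iff it sets at least a = b - k + 1 = \<alpha> b variables of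
every block. So the formula is (m a)-admissible, and its satisfying assignments of weight
m a = \<alpha> n are those setting exactly a variables in each block, of which there are
(b choose a)^m.\<close>

definition block :: "nat \<Rightarrow> nat \<Rightarrow> nat set" where
  "block b j = {j * b..<j * b + b}"

definition positive_clause :: "nat set \<Rightarrow> clause" where
  "positive_clause K = (\<lambda>i. (i, True)) ` K"

definition block_cnf :: "nat \<Rightarrow> nat \<Rightarrow> nat \<Rightarrow> cnf" where
  "block_cnf b m k = {positive_clause K | K j. j < m \<and> K \<subseteq> block b j \<and> card K = k}"

lemma card_subsets_with_block_intersections:
  assumes "finite I" "disjoint_family_on B I" "\<And>j. j \<in> I \<Longrightarrow> finite (B j)"
  shows "card {A. A \<subseteq> (\<Union>j\<in>I. B j) \<and> (\<forall>j\<in>I. card (A \<inter> B j) = a)}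
           = (\<Prod>j\<in>I. card (B j) choose a)"
proof -
  define P where "P = (\<Pi>\<^sub>E j\<in>I. {X. X \<subseteq> B j \<and> card X = a})"
  define glue where "glue f = (\<Union>j\<in>I. f j)" for f :: "'a \<Rightarrow> 'b set"
  have glue_Int: "glue f \<inter> B i = f i" if "f \<in> P" "i \<in> I" for f i
  proof -
    have "f j \<subseteq> B j" if "j \<in> I" for j
      using \<open>f \<in> P\<close> that unfolding P_def by auto
    with \<open>i \<in> I\<close> show ?thesis
      unfolding glue_def by (auto dest: disjoint_family_onD[OF assms(2)])
  qed
  have "bij_betw glue P {A. A \<subseteq> (\<Union>j\<in>I. B j) \<and> (\<forall>j\<in>I. card (A \<inter> B j) = a)}"
  proof (rule bij_betw_imageI)
    show "inj_on glue P"
    proof (rule inj_onI)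
      fix f g assume f: "f \<in> P" and g: "g \<in> P" and "glue f = glue g"
      then have "f i = g i" if "i \<in> I" for i
        using glue_Int[OF f that] glue_Int[OF g that] by simp
      then show "f = g"
        using f g unfolding P_def by (intro PiE_ext) auto
    qed
    show "glue ` P = {A. A \<subseteq> (\<Union>j\<in>I. B j) \<and> (\<forall>j\<in>I. card (A \<inter> B j) = a)}"
    proof (intro equalityI subsetI)
      fix A assume "A \<in> glue ` P"
      then obtain f where f: "f \<in> P" and A: "A = glue f" by blast
      have "A \<subseteq> (\<Union>j\<in>I. B j)"
        using f unfolding A glue_def P_def by auto
      moreover have "card (A \<inter> B j) = a" if "j \<in> I" for j
        using glue_Int[OF f that] f that unfolding A P_def by auto
      ultimately show "A \<in> {A. A \<subseteq> (\<Union>j\<in>I. B j) \<and> (\<forall>j\<in>I. card (A \<inter> B j) = a)}"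
        by blast
    next
      fix A assume A: "A \<in> {A. A \<subseteq> (\<Union>j\<in>I. B j) \<and> (\<forall>j\<in>I. card (A \<inter> B j) = a)}"
      have "(\<lambda>j\<in>I. A \<inter> B j) \<in> P" using A unfolding P_def by auto
      moreover have "A = glue (\<lambda>j\<in>I. A \<inter> B j)" using A unfolding glue_def by auto
      ultimately show "A \<in> glue ` P" by blast
    qed
  qed
  then have "card {A. A \<subseteq> (\<Union>j\<in>I. B j) \<and> (\<forall>j\<in>I. card (A \<inter> B j) = a)} = card P"
    by (simp add: bij_betw_same_card)
  also have "\<dots> = (\<Prod>j\<in>I. card (B j) choose a)"
    unfolding P_def using assms(1,3) by (simp add: card_PiE n_subsets)
  finally show ?thesis .
qed

lemma card_block [simp]: "card (block b j) = b"
  by (simp add: block_def)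

lemma finite_block [simp]: "finite (block b j)"
  by (simp add: block_def)

lemma disjoint_family_on_block: "disjoint_family_on (block b) I"
proof -
  have "x div b = j" if "x \<in> block b j" for x j
    using that by (intro div_nat_eqI) (auto simp: block_def mult.commute)
  then show ?thesis
    unfolding disjoint_family_on_def by blast
qed

lemma UN_block: "(\<Union>j<m. block b j) = {0..<m * b}"
proof (intro equalityI subsetI)
  fix x assume "x \<in> (\<Union>j<m. block b j)"
  then obtain j where "j < m" "x < j * b + b"
    by (auto simp: block_def)
  moreover have "j * b + b \<le> m * b"
    using \<open>j < m\<close> mult_le_mono1[of "Suc j" m b] by simp
  ultimately show "x \<in> {0..<m * b}" by simp
next
  fix x assume x: "x \<in> {0..<m * b}"
  then have "0 < b" by (cases b) auto
  then have "x < x div b * b + b"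
    using div_mult_mod_eq[of x b] mod_less_divisor[of b x] by linarith
  moreover have "x div b < m"
    using x by (simp add: less_mult_imp_div_less)
  ultimately show "x \<in> (\<Union>j<m. block b j)"
    unfolding block_def by (intro UN_I[of "x div b"]) (auto simp: div_times_less_eq_dividend)
qed

lemma card_eq_sum_card_Int_block:
  assumes "A \<subseteq> {0..<m * b}"
  shows "card A = (\<Sum>j<m. card (A \<inter> block b j))"
proof -
  have "A = (\<Union>j<m. A \<inter> block b j)"
    using assms UN_block by blast
  also have "card \<dots> = (\<Sum>j<m. card (A \<inter> block b j))"
    using disjoint_family_on_block[of b "{..<m}"]
    by (intro card_UN_disjoint) (auto simp: disjoint_family_on_def)
  finally show ?thesis .
qed

lemma sat_clause_positive_clause: "sat_clause A (positive_clause K) \<longleftrightarrow> K \<inter> A \<noteq> {}"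
  by (auto simp: sat_clause_def positive_clause_def)

lemma card_positive_clause: "card (positive_clause K) = card K"
  unfolding positive_clause_def by (rule card_image) (auto simp: inj_on_def)

lemma block_subset: "j < m \<Longrightarrow> block b j \<subseteq> {0..<m * b}"
  unfolding UN_block[symmetric] by blast

lemma is_kcnf_block_cnf: "is_kcnf (m * b) k (block_cnf b m k)"
proof -
  have clause: "\<exists>K. C = positive_clause K \<and> K \<subseteq> {0..<m * b} \<and> card K = k"
    if C_in: "C \<in> block_cnf b m k" for C
  proof -
    obtain K j where "C = positive_clause K" "j < m" "K \<subseteq> block b j" "card K = k"
      using C_in unfolding block_cnf_def by blast
    then show ?thesis
      using block_subset by blast
  qed
  then have "block_cnf b m k \<subseteq> positive_clause ` Pow {0..<m * b}"
    by blast
  then have "finite (block_cnf b m k)"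
    by (rule finite_subset) simp
  moreover have "finite C \<and> card C \<le> k \<and> (\<forall>(i, _)\<in>C. i < m * b)" if C_in: "C \<in> block_cnf b m k" for C
  proof -
    obtain K where C: "C = positive_clause K" and K: "K \<subseteq> {0..<m * b}" "card K = k"
      using clause[OF C_in] by blast
    then have "finite K"
      using finite_subset by blast
    moreover have "card C = k"
      using K by (simp add: C card_positive_clause)
    ultimately show ?thesis
      using K by (auto simp: C positive_clause_def)
  qed
  ultimately show ?thesis
    unfolding is_kcnf_def by blast
qed

lemma satisfies_block_cnf_iff:
  "satisfies A (block_cnf b m k) \<longleftrightarrow> (\<forall>j<m. card (block b j - A) < k)"
proof
  assume sat: "satisfies A (block_cnf b m k)"
  show "\<forall>j<m. card (block b j - A) < k"
  proof (intro allI impI)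
    fix j assume j: "j < m"
    show "card (block b j - A) < k"
    proof (rule ccontr)
      assume "\<not> card (block b j - A) < k"
      then obtain K where K: "K \<subseteq> block b j - A" "card K = k"
        by (meson not_less obtain_subset_with_card_n)
      then have "positive_clause K \<in> block_cnf b m k"
        using j unfolding block_cnf_def by blast
      then have "sat_clause A (positive_clause K)"
        using sat unfolding satisfies_def by blast
      then have "K \<inter> A \<noteq> {}"
        by (simp add: sat_clause_positive_clause)
      with K show False
        by blast
    qed
  qed
next
  assume small: "\<forall>j<m. card (block b j - A) < k"
  show "satisfies A (block_cnf b m k)"
    unfolding satisfies_def
  proof
    fix C assume "C \<in> block_cnf b m k"
    then obtain K j where C: "C = positive_clause K" and K: "j < m" "K \<subseteq> block b j" "card K = k"
      unfolding block_cnf_def by blast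
    have "K \<inter> A \<noteq> {}"
    proof
      assume "K \<inter> A = {}"
      then have "K \<subseteq> block b j - A"
        using K by blast
      then have "k \<le> card (block b j - A)"
        using K card_mono[of "block b j - A" K] by simp
      with small K show False
        by (meson not_less)
    qed
    then show "sat_clause A C"
      by (simp add: C sat_clause_positive_clause)
  qed
qed

lemma satisfies_block_cnf_iff_card_Int_block:
  assumes "b + 1 = a + k"
  shows "satisfies A (block_cnf b m k) \<longleftrightarrow> (\<forall>j<m. a \<le> card (A \<inter> block b j))"
proof -
  have "card (block b j - A) < k \<longleftrightarrow> a \<le> card (A \<inter> block b j)" for j
  proof -
    have "card (block b j - A) = b - card (A \<inter> block b j)"
      using card_Diff_subset_Int[of "block b j" A] by (simp add: Int_commute)
    moreover have "card (A \<inter> block b j) \<le> b"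
      using card_mono[OF finite_block, of "A \<inter> block b j" b j] by simp
    ultimately show ?thesis
      using assms by linarith
  qed
  then show ?thesis
    by (simp add: satisfies_block_cnf_iff)
qed

lemma admissible_block_cnf:
  assumes "b + 1 = a + k"
  shows "admissible (m * b) (m * a) (block_cnf b m k)"
  unfolding admissible_def
proof (intro allI impI notI)
  fix A assume A: "A \<subseteq> {0..<m * b} \<and> card A < m * a" and "satisfies A (block_cnf b m k)"
  then have "\<forall>j<m. a \<le> card (A \<inter> block b j)"
    using satisfies_block_cnf_iff_card_Int_block[OF assms] by blast
  then have "(\<Sum>j<m. a) \<le> card A"
    using card_eq_sum_card_Int_block A by (metis sum_mono lessThan_iff)
  with A show False by simp
qed

lemma card_sat_t_block_cnf_ge:
  assumes "b + 1 = a + k"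
  shows "(b choose a) ^ m \<le> card (sat_t (m * b) (m * a) (block_cnf b m k))"
proof -
  let ?balanced = "{A. A \<subseteq> {0..<m * b} \<and> (\<forall>j<m. card (A \<inter> block b j) = a)}"
  have "card ?balanced = (\<Prod>j<m. card (block b j) choose a)"
    using card_subsets_with_block_intersections[OF finite_lessThan disjoint_family_on_block finite_block]
    unfolding UN_block Ball_def lessThan_iff .
  then have card_balanced: "card ?balanced = (b choose a) ^ m"
    by simp
  have balanced_sat: "?balanced \<subseteq> sat_t (m * b) (m * a) (block_cnf b m k)"
  proof
    fix A assume "A \<in> ?balanced"
    then have A: "A \<subseteq> {0..<m * b}" and bal: "\<forall>j<m. card (A \<inter> block b j) = a"
      by blast+
    have "card A = m * a"
      using card_eq_sum_card_Int_block[OF A] bal by simp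
    moreover have "satisfies A (block_cnf b m k)"
      using bal satisfies_block_cnf_iff_card_Int_block[OF assms] by simp
    ultimately show "A \<in> sat_t (m * b) (m * a) (block_cnf b m k)"
      using A unfolding sat_t_def by blast
  qed
  have "finite (sat_t (m * b) (m * a) (block_cnf b m k))"
    by (rule finite_subset[of _ "Pow {0..<m * b}"]) (auto simp: sat_t_def)
  from card_mono[OF this balanced_sat] show ?thesis
    unfolding card_balanced .
qed

lemma card_sat_t_le_S:
  assumes "is_kcnf n k F" "admissible n t F"
  shows "card (sat_t n t F) \<le> S n t k"
proof -
  let ?V = "{card (sat_t n t F) | F. is_kcnf n k F \<and> admissible n t F}"
  have "card (sat_t n t F) \<le> card (Pow {0..<n})" for F
    by (rule card_mono) (auto simp: sat_t_def)
  then have "?V \<subseteq> {..card (Pow {0..<n})}"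
    by auto
  then have "finite ?V"
    using finite_subset by blast
  moreover have "card (sat_t n t F) \<in> ?V"
    using assms by blast
  ultimately show ?thesis
    unfolding S_def by (rule Max_ge)
qed

theorem theorem2:
  fixes k b n :: nat and \<alpha> :: real
  assumes "k \<ge> 2" and "0 \<le> \<alpha>" and "\<alpha> < 1"
    and "real b = (real k - 1) / (1 - \<alpha>)"
    and "n > 0" and "b dvd n"
  shows "real (S n (nat \<lfloor>\<alpha> * real n\<rfloor>) k)
           \<ge> real (b choose nat \<lfloor>\<alpha> * real b\<rfloor>) ^ (n div b)"
proof -
  define m where "m = n div b"
  define a where "a = b + 1 - k"
  have b_k: "real b - real b * \<alpha> = real k - 1"
    using assms(3,4) by (simp add: field_simps)
  have "real b * \<alpha> \<ge> 0"
    using assms(2) by simp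
  then have "k \<le> b + 1"
    using b_k by linarith
  then have ab: "b + 1 = a + k" and "real a = real b + 1 - real k"
    unfolding a_def by (simp_all add: of_nat_diff)
  then have \<alpha>_b: "\<alpha> * real b = real a"
    using b_k by (simp add: mult.commute)
  have n: "n = m * b"
    using assms(6) unfolding m_def by simp
  then have "\<alpha> * real n = real (m * a)"
    using \<alpha>_b by (simp add: algebra_simps)
  then have "nat \<lfloor>\<alpha> * real n\<rfloor> = m * a" "nat \<lfloor>\<alpha> * real b\<rfloor> = a"
    using \<alpha>_b by (simp_all only: floor_of_nat nat_int)
  moreover have "(b choose a) ^ m \<le> S (m * b) (m * a) k"
    using card_sat_t_block_cnf_ge[OF ab]
      card_sat_t_le_S[OF is_kcnf_block_cnf admissible_block_cnf[OF ab]]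
    by (rule order_trans)
  ultimately show ?thesis
    unfolding m_def[symmetric] by (simp flip: n of_nat_power)
qed

end
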